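(* Let $A$ and $B$ be finite simple graphs, and fix $a \in V(A)$ and $b \in V(B)$. Let $D$ be the graph obtained from the disjoint union of $A$ and $B$ by identifying the vertices $a$ and $b$. If $A$ and $B$ both satisfy the bunkbed conjecture, then $D$ satisfies the bunkbed conjecture.
   Context: All graphs are finite and simple. For a graph $G$, a weight is a function $\mu\colon E(G)\to[0,1]$; the associated edge-percolation probability space has sample space $\Omega=\mathscr P(E(G))$ (all subsets of edges), with $\mathbb P_{G,\mu}(X)=\prod_{e\in X}\mu(e)\prod_{e\notin X}(1-\mu(e))$ for $X\subseteq E(G)$, i.e. each edge $e$ is independently open with probability $\mu(e)$. For $x,y\in V(G)$, $(x\sim y)$ (or $(x\sim_G y)$) is the event that $x$ and $y$ are joined by a path of open edges. The bunkbed graph $BB(G)=G\,\Box\, K_2$ has vertex set $V(G)\times\{0,1\}$, writing $x^-=(x,0)$, $x^+=(x,1)$, and edges $x^-y^-$ and $x^+y^+$ for every $xy\in E(G)$, plus the vertical edges $x^-x^+$ for every $x\in V(G)$. A weight $\mu$ on $BB(G)$ is symmetric if $\mu(x^-y^-)=\mu(x^+y^+)$ for every $xy\in E(G)$ (vertical edges may have arbitrary weights). A graph $G$ satisfies the bunkbed conjecture if for every symmetric weight $\mu$ on $BB(G)$ and all $x,y\in V(G)$, $\mathbb P_{BB(G),\mu}(x^-\sim y^-)\ge \mathbb P_{BB(G),\mu}(x^-\sim y^+)$. *)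

theory Defs
  imports Complex_Main
begin

definition simple_graph :: "'a set \<Rightarrow> 'a set set \<Rightarrow> bool" where
  "simple_graph V E \<longleftrightarrow> finite V \<and>
     (\<forall>e\<in>E. \<exists>x y. x \<in> V \<and> y \<in> V \<and> x \<noteq> y \<and> e = {x, y})"

definition joined :: "'a set set \<Rightarrow> 'a \<Rightarrow> 'a \<Rightarrow> bool" where
  "joined X x y \<longleftrightarrow> (x, y) \<in> {(u, v). {u, v} \<in> X}\<^sup>*"

definition perc_prob :: "'a set set \<Rightarrow> ('a set \<Rightarrow> real) \<Rightarrow> ('a set set \<Rightarrow> bool) \<Rightarrow> real" where
  "perc_prob E mu P = (\<Sum>X\<in>{X. X \<subseteq> E \<and> P X}.
      (\<Prod>e\<in>X. mu e) * (\<Prod>e\<in>E - X. 1 - mu e))"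

text \<open>Bunkbed graph: x^- = (x, False), x^+ = (x, True).\<close>
definition bb_vertices :: "'a set \<Rightarrow> ('a \<times> bool) set" where
  "bb_vertices V = V \<times> UNIV"

definition bb_edges :: "'a set \<Rightarrow> 'a set set \<Rightarrow> ('a \<times> bool) set set" where
  "bb_edges V E = {{(x, s), (y, s)} | x y s. {x, y} \<in> E}
                 \<union> {{(x, False), (x, True)} | x. x \<in> V}"

definition symmetric_weight :: "'a set \<Rightarrow> 'a set set \<Rightarrow> (('a \<times> bool) set \<Rightarrow> real) \<Rightarrow> bool" where
  "symmetric_weight V E mu \<longleftrightarrow>
     (\<forall>e\<in>bb_edges V E. 0 \<le> mu e \<and> mu e \<le> 1) \<and>
     (\<forall>x y. {x, y} \<in> E \<longrightarrow> mu {(x, False), (y, False)} = mu {(x, True), (y, True)})"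

definition bunkbed :: "'a set \<Rightarrow> 'a set set \<Rightarrow> bool" where
  "bunkbed V E \<longleftrightarrow> (\<forall>mu. symmetric_weight V E mu \<longrightarrow>
     (\<forall>x\<in>V. \<forall>y\<in>V.
        perc_prob (bb_edges V E) mu (\<lambda>X. joined X (x, False) (y, True))
        \<le> perc_prob (bb_edges V E) mu (\<lambda>X. joined X (x, False) (y, False))))"

text \<open>Gluing: disjoint union of A (left copy) and B (right copy) with b identified with a.\<close>
definition glue_map :: "'a \<Rightarrow> 'b \<Rightarrow> 'b \<Rightarrow> 'a + 'b" where
  "glue_map a b v = (if v = b then Inl a else Inr v)"

definition glue_vertices :: "'a set \<Rightarrow> 'b set \<Rightarrow> 'a \<Rightarrow> 'b \<Rightarrow> ('a + 'b) set" where
  "glue_vertices VA VB a b = Inl ` VA \<union> glue_map a b ` VB"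

definition glue_edges :: "'a set set \<Rightarrow> 'b set set \<Rightarrow> 'a \<Rightarrow> 'b \<Rightarrow> ('a + 'b) set set" where
  "glue_edges EA EB a b = (\<lambda>e. Inl ` e) ` EA \<union> (\<lambda>e. glue_map a b ` e) ` EB"

end

theory Submission
  imports Defs
begin

text \<open>The glued vertex c = a = b together with its two copies separates the bunkbed of D
  into the bunkbed of A and the bunkbed of B minus the post at c; percolation on the two parts is
  independent. For x, y on the same side, say A, the B-part only matters through whether it
  joins c^- to c^+, so the probability of x^- ~ y^t is a convex combination of two
  A-probabilities: one with the original weights and one with the post at c forced open. Both
  satisfy the bunkbed inequality. For x in A and y in B, every path passes through c^- or c^+,
  and inclusion-exclusion together with the layer symmetry of the B-part shows that
  P(x^- ~ y^-) - P(x^- ~ y^+) is the product of the bunkbed differences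
  P_A(x^- ~ c^-) - P_A(x^- ~ c^+) and P_B(c^- ~ y^-) - P_B(c^+ ~ y^-), the latter with the
  post at c closed.\<close>

section \<open>Expectations under edge percolation\<close>

definition perc_weight :: "'e set \<Rightarrow> ('e \<Rightarrow> real) \<Rightarrow> 'e set \<Rightarrow> real" where
  "perc_weight E mu X = (\<Prod>e\<in>X. mu e) * (\<Prod>e\<in>E - X. 1 - mu e)"

definition perc_expect :: "'e set \<Rightarrow> ('e \<Rightarrow> real) \<Rightarrow> ('e set \<Rightarrow> real) \<Rightarrow> real" where
  "perc_expect E mu F = (\<Sum>X\<in>Pow E. perc_weight E mu X * F X)"

lemma perc_prob_eq_perc_expect:
  assumes "finite E"
  shows "perc_prob E mu P = perc_expect E mu (\<lambda>X. of_bool (P X))"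
proof -
  have "{X. X \<subseteq> E \<and> P X} = {X \<in> Pow E. P X}" by auto
  then have "perc_prob E mu P = (\<Sum>X\<in>{X \<in> Pow E. P X}. perc_weight E mu X)"
    unfolding perc_prob_def perc_weight_def by simp
  also have "\<dots> = (\<Sum>X\<in>Pow E. if P X then perc_weight E mu X else 0)"
    using sum.inter_filter[of "Pow E" "perc_weight E mu" P] assms by simp
  also have "\<dots> = perc_expect E mu (\<lambda>X. of_bool (P X))"
    unfolding perc_expect_def by (rule sum.cong) auto
  finally show ?thesis .
qed

lemma perc_expect_cong:
  assumes "\<And>e. e \<in> E \<Longrightarrow> mu e = nu e" "\<And>X. X \<subseteq> E \<Longrightarrow> F X = G X"
  shows "perc_expect E mu F = perc_expect E nu G"
  unfolding perc_expect_def perc_weight_def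
proof (rule sum.cong[OF refl])
  fix X assume X: "X \<in> Pow E"
  then have "(\<Prod>e\<in>X. mu e) = (\<Prod>e\<in>X. nu e)" "(\<Prod>e\<in>E - X. 1 - mu e) = (\<Prod>e\<in>E - X. 1 - nu e)"
    using assms(1) by (auto intro!: prod.cong)
  then show "(\<Prod>e\<in>X. mu e) * (\<Prod>e\<in>E - X. 1 - mu e) * F X = (\<Prod>e\<in>X. nu e) * (\<Prod>e\<in>E - X. 1 - nu e) * G X"
    using X assms(2) by simp
qed

lemma perc_expect_add: "perc_expect E mu (\<lambda>X. F X + G X) = perc_expect E mu F + perc_expect E mu G"
  unfolding perc_expect_def by (simp add: distrib_left sum.distrib)

lemma perc_expect_diff: "perc_expect E mu (\<lambda>X. F X - G X) = perc_expect E mu F - perc_expect E mu G"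
  unfolding perc_expect_def by (simp add: right_diff_distrib sum_subtractf)

lemma perc_expect_cmult: "perc_expect E mu (\<lambda>X. c * F X) = c * perc_expect E mu F"
  unfolding perc_expect_def by (simp add: sum_distrib_left mult.left_commute)

lemma perc_expect_multc: "perc_expect E mu (\<lambda>X. F X * c) = perc_expect E mu F * c"
  unfolding perc_expect_def by (simp add: sum_distrib_right mult.assoc)

lemma perc_weight_Un:
  assumes "finite E1" "finite E2" "E1 \<inter> E2 = {}" "X1 \<subseteq> E1" "X2 \<subseteq> E2"
  shows "perc_weight (E1 \<union> E2) mu (X1 \<union> X2) = perc_weight E1 mu X1 * perc_weight E2 mu X2"
proof -
  have "finite X1" "finite X2" "X1 \<inter> X2 = {}" "(E1 - X1) \<inter> (E2 - X2) = {}"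
    using assms finite_subset by auto
  moreover have "(E1 \<union> E2) - (X1 \<union> X2) = (E1 - X1) \<union> (E2 - X2)" using assms by auto
  ultimately show ?thesis
    unfolding perc_weight_def using assms by (simp add: prod.union_disjoint)
qed

lemma perc_expect_Un_disjoint:
  assumes "finite E1" "finite E2" "E1 \<inter> E2 = {}"
  shows "perc_expect (E1 \<union> E2) mu F =
    perc_expect E1 mu (\<lambda>X1. perc_expect E2 mu (\<lambda>X2. F (X1 \<union> X2)))"
proof -
  let ?U = "\<lambda>(X1, X2). X1 \<union> X2"
  have inj: "inj_on ?U (Pow E1 \<times> Pow E2)"
  proof (rule inj_onI, clarsimp)
    fix X1 X2 Y1 Y2
    assume "X1 \<subseteq> E1" "X2 \<subseteq> E2" "Y1 \<subseteq> E1" "Y2 \<subseteq> E2" "X1 \<union> X2 = Y1 \<union> Y2"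
    then have "X1 = (Y1 \<union> Y2) \<inter> E1" "Y1 = (Y1 \<union> Y2) \<inter> E1"
      "X2 = (Y1 \<union> Y2) \<inter> E2" "Y2 = (Y1 \<union> Y2) \<inter> E2"
      using assms(3) by auto
    then show "X1 = Y1 \<and> X2 = Y2" by metis
  qed
  have img: "?U ` (Pow E1 \<times> Pow E2) = Pow (E1 \<union> E2)"
  proof (intro equalityI subsetI)
    fix X assume "X \<in> Pow (E1 \<union> E2)"
    then have "X = ?U (X \<inter> E1, X \<inter> E2)" "(X \<inter> E1, X \<inter> E2) \<in> Pow E1 \<times> Pow E2" by auto
    then show "X \<in> ?U ` (Pow E1 \<times> Pow E2)" by blast
  qed auto
  have "perc_expect (E1 \<union> E2) mu F =
      (\<Sum>p\<in>Pow E1 \<times> Pow E2. perc_weight (E1 \<union> E2) mu (?U p) * F (?U p))"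
    unfolding perc_expect_def by (subst img[symmetric], subst sum.reindex[OF inj]) (simp add: comp_def)
  also have "\<dots> = (\<Sum>p\<in>Pow E1 \<times> Pow E2.
      perc_weight E1 mu (fst p) * (perc_weight E2 mu (snd p) * F (fst p \<union> snd p)))"
    by (rule sum.cong[OF refl]) (auto simp: perc_weight_Un[OF assms])
  also have "\<dots> = (\<Sum>X1\<in>Pow E1. \<Sum>X2\<in>Pow E2.
      perc_weight E1 mu X1 * (perc_weight E2 mu X2 * F (X1 \<union> X2)))"
    by (subst sum.cartesian_product) (simp add: case_prod_beta)
  finally show ?thesis
    unfolding perc_expect_def by (simp add: sum_distrib_left)
qed

lemma perc_expect_singleton: "perc_expect {e} mu F = (1 - mu e) * F {} + mu e * F {e}"
proof -
  have "Pow {e} = {{}, {e}}" by auto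
  then show ?thesis unfolding perc_expect_def perc_weight_def by (simp add: insert_Diff_if)
qed

lemma perc_expect_one: "finite E \<Longrightarrow> perc_expect E mu (\<lambda>_. 1) = 1"
proof (induction E rule: finite_induct)
  case empty then show ?case by (simp add: perc_expect_def perc_weight_def)
next
  case (insert e E)
  then have "perc_expect (insert e E) mu (\<lambda>_. 1) = perc_expect {e} mu (\<lambda>_. perc_expect E mu (\<lambda>_. 1))"
    using perc_expect_Un_disjoint[of "{e}" E mu "\<lambda>_. 1"] by simp
  with insert show ?case by (simp add: perc_expect_singleton)
qed

lemma perc_expect_const: "finite E \<Longrightarrow> perc_expect E mu (\<lambda>_. c) = c"
  using perc_expect_cmult[of E mu c "\<lambda>_. 1"] perc_expect_one[of E mu] by simp

lemma perc_expect_remove: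
  assumes "finite E" "e \<in> E"
  shows "perc_expect E mu F =
    perc_expect (E - {e}) mu (\<lambda>X. (1 - mu e) * F X + mu e * F (insert e X))"
proof -
  have "E = (E - {e}) \<union> {e}" using assms by auto
  then show ?thesis
    using perc_expect_Un_disjoint[of "E - {e}" "{e}" mu F] assms by (simp add: perc_expect_singleton)
qed

lemma perc_expect_insert_eq_weight_one:
  assumes "finite E" "e \<in> E"
  shows "perc_expect E mu (\<lambda>X. F (insert e X)) = perc_expect E (mu(e := 1)) F"
proof -
  have "perc_expect E (mu(e := 1)) F = perc_expect (E - {e}) (mu(e := 1)) (\<lambda>X. F (insert e X))"
    using perc_expect_remove[OF assms] by simp
  also have "\<dots> = perc_expect (E - {e}) mu (\<lambda>X. F (insert e X))"
    by (rule perc_expect_cong) auto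
  also have "\<dots> = perc_expect E mu (\<lambda>X. F (insert e X))"
    using perc_expect_remove[OF assms] by (simp add: algebra_simps)
  finally show ?thesis by simp
qed

lemma perc_expect_remove_eq_weight_zero:
  assumes "finite E" "e \<in> E"
  shows "perc_expect (E - {e}) mu F = perc_expect E (mu(e := 0)) F"
proof -
  have "perc_expect E (mu(e := 0)) F = perc_expect (E - {e}) (mu(e := 0)) F"
    using perc_expect_remove[OF assms] by simp
  also have "\<dots> = perc_expect (E - {e}) mu F"
    by (rule perc_expect_cong) auto
  finally show ?thesis by simp
qed

lemma perc_expect_reindex:
  assumes "inj_on h E"
  shows "perc_expect (h ` E) mu F = perc_expect E (mu \<circ> h) (\<lambda>X. F (h ` X))"
proof -
  have inj: "inj_on (image h) (Pow E)" by (rule inj_on_image_Pow[OF assms])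
  have weight: "perc_weight (h ` E) mu (h ` X) = perc_weight E (mu \<circ> h) X" if "X \<subseteq> E" for X
  proof -
    have "inj_on h X" "inj_on h (E - X)" "h ` E - h ` X = h ` (E - X)"
      using assms that inj_on_subset by (blast, blast, simp add: inj_on_image_set_diff)
    then show ?thesis unfolding perc_weight_def by (simp add: prod.reindex)
  qed
  have img: "Pow (h ` E) = image h ` Pow E" by (simp add: image_Pow_surj)
  show ?thesis
    unfolding perc_expect_def img by (subst sum.reindex[OF inj]) (simp add: weight comp_def)
qed

lemma perc_expect_mono:
  assumes "\<And>e. e \<in> E \<Longrightarrow> 0 \<le> mu e \<and> mu e \<le> 1" "\<And>X. X \<subseteq> E \<Longrightarrow> F X \<le> G X"
  shows "perc_expect E mu F \<le> perc_expect E mu G"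
proof -
  have "0 \<le> perc_weight E mu X" if "X \<subseteq> E" for X
    unfolding perc_weight_def using assms(1) that by (intro mult_nonneg_nonneg prod_nonneg) auto
  then show ?thesis
    unfolding perc_expect_def using assms(2) by (intro sum_mono mult_left_mono) auto
qed

lemma perc_expect_of_bool_bounds:
  assumes "finite E" "\<And>e. e \<in> E \<Longrightarrow> 0 \<le> mu e \<and> mu e \<le> 1"
  shows "0 \<le> perc_expect E mu (\<lambda>X. of_bool (P X))" "perc_expect E mu (\<lambda>X. of_bool (P X)) \<le> 1"
proof -
  show "0 \<le> perc_expect E mu (\<lambda>X. of_bool (P X))"
    using perc_expect_mono[of E mu, OF assms(2), where F = "\<lambda>_. 0" and G = "\<lambda>X. of_bool (P X)"]
    by (simp add: perc_expect_def)
  show "perc_expect E mu (\<lambda>X. of_bool (P X)) \<le> 1"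
    using perc_expect_mono[of E mu, OF assms(2), where F = "\<lambda>X. of_bool (P X)" and G = "\<lambda>_. 1"]
    by (simp add: perc_expect_one[OF assms(1)])
qed

lemma perc_expect_if:
  fixes mu :: "'e \<Rightarrow> real" and P :: "'e set \<Rightarrow> bool"
  assumes "finite E"
  defines "p \<equiv> perc_expect E mu (\<lambda>X. of_bool (P X))"
  shows "perc_expect E mu (\<lambda>X. if P X then c else d) = p * c + (1 - p) * d"
proof -
  have "perc_expect E mu (\<lambda>X. if P X then c else d) =
      perc_expect E mu (\<lambda>X. of_bool (P X) * (c - d) + d)"
    by (intro perc_expect_cong) auto
  also have "\<dots> = p * (c - d) + d"
    unfolding perc_expect_add perc_expect_multc perc_expect_const[OF assms(1)] p_def ..
  finally show ?thesis by (simp add: algebra_simps)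
qed

lemma of_bool_disj_conj:
  "(of_bool ((P1 \<and> Q1) \<or> (P2 \<and> Q2)) :: real) =
    of_bool P1 * of_bool Q1 + of_bool P2 * of_bool Q2 - of_bool (P1 \<and> P2) * of_bool (Q1 \<and> Q2)"
  by (cases P1; cases P2; cases Q1; cases Q2) simp_all

section \<open>Connectivity in a set of open edges\<close>

lemma joined_refl [simp]: "joined X x x"
  unfolding joined_def by simp

lemma joined_edge: "{x, y} \<in> X \<Longrightarrow> joined X x y"
  unfolding joined_def by auto

lemma joined_trans: "joined X x y \<Longrightarrow> joined X y z \<Longrightarrow> joined X x z"
  unfolding joined_def by (rule rtrancl_trans)

lemma joined_step: "joined X x y \<Longrightarrow> {y, z} \<in> X \<Longrightarrow> joined X x z"
  using joined_trans joined_edge by metis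

lemma joined_induct [consumes 1, case_names refl step]:
  assumes "joined X x y" "P x" "\<And>y z. joined X x y \<Longrightarrow> {y, z} \<in> X \<Longrightarrow> P y \<Longrightarrow> P z"
  shows "P y"
  using assms(1) unfolding joined_def
proof (induction rule: rtrancl_induct)
  case base then show ?case using assms(2) by simp
next
  case (step y z) then show ?case using assms(3) unfolding joined_def by auto
qed

lemma joined_sym: "joined X x y \<Longrightarrow> joined X y x"
proof (induction rule: joined_induct)
  case (step y z)
  then have "joined X z y" by (simp add: joined_edge insert_commute)
  then show ?case using step(3) joined_trans by metis
qed simp

lemma joined_commute: "joined X x y \<longleftrightarrow> joined X y x"
  using joined_sym by metis

lemma joined_mono: "joined X x y \<Longrightarrow> X \<subseteq> Y \<Longrightarrow> joined Y x y"
  by (induction rule: joined_induct) (auto intro: joined_step)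

lemma joined_in_Union: "joined X x y \<Longrightarrow> x \<noteq> y \<Longrightarrow> x \<in> \<Union>X \<and> y \<in> \<Union>X"
  by (induction rule: joined_induct) auto

lemma image_eq_doubleton_obtain:
  assumes "inj h" "{x', y'} = h ` e"
  obtains x y where "x' = h x" "y' = h y" "e = {x, y}"
proof -
  obtain x y where xy: "x \<in> e" "x' = h x" "y \<in> e" "y' = h y"
    using assms(2) by (metis image_iff insertCI)
  then have "h ` e = h ` {x, y}" using assms(2) by simp
  then have "e = {x, y}" by (simp only: inj_image_eq_iff[OF assms(1)])
  then show thesis using xy that by blast
qed

lemma joined_image_iff:
  assumes "inj h"
  shows "joined ((\<lambda>e. h ` e) ` X) (h x) (h y) \<longleftrightarrow> joined X x y"
proof
  assume "joined X x y"
  then show "joined ((\<lambda>e. h ` e) ` X) (h x) (h y)"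
  proof (induction rule: joined_induct)
    case (step y z)
    have "h ` {y, z} \<in> (\<lambda>e. h ` e) ` X" using step(2) by (rule imageI)
    then have "{h y, h z} \<in> (\<lambda>e. h ` e) ` X" by simp
    then show ?case using step(3) joined_step by metis
  qed simp
next
  have "\<exists>v. z = h v \<and> joined X x v" if "joined ((\<lambda>e. h ` e) ` X) (h x) z" for z
    using that
  proof (induction rule: joined_induct)
    case (step y z)
    then obtain v where v: "y = h v" "joined X x v" by auto
    from step(2) obtain e where e: "e \<in> X" "{y, z} = h ` e" by auto
    then obtain w w' where w: "y = h w" "z = h w'" "e = {w, w'}"
      using image_eq_doubleton_obtain[OF assms] by blast
    then have "{v, w'} \<in> X" using e(1) v(1) assms by (simp add: inj_eq)
    then have "joined X x w'" by (rule joined_step[OF v(2)])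
    then show ?case using w(2) by blast
  qed (intro exI[of _ x], simp)
  moreover assume "joined ((\<lambda>e. h ` e) ` X) (h x) (h y)"
  ultimately obtain v where "h y = h v" "joined X x v" by blast
  then show "joined X x y" using assms by (simp add: inj_eq)
qed

lemma joined_insert_edge_iff:
  "joined (insert {p, q} X) u w \<longleftrightarrow>
     joined X u w \<or> (joined X u p \<and> joined X q w) \<or> (joined X u q \<and> joined X p w)"
  (is "?lhs \<longleftrightarrow> ?rhs w")
proof
  assume ?lhs
  then show "?rhs w"
  proof (induction rule: joined_induct)
    case (step y z)
    show ?case
    proof (cases "{y, z} \<in> X")
      case True
      then show ?thesis using step(3) joined_step by metis
    next
      case False
      then have yz: "(y = p \<and> z = q) \<or> (y = q \<and> z = p)"
        using step(2) by (auto simp: doubleton_eq_iff)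
      then have "joined X u p \<or> joined X u q" using step(3) by blast
      then show ?thesis using yz by auto
    qed
  qed simp
next
  let ?Y = "insert {p, q} X"
  have mono: "joined ?Y x y" if "joined X x y" for x y
    using that by (rule joined_mono) auto
  have pq: "joined ?Y p q" by (rule joined_edge) simp
  then have qp: "joined ?Y q p" by (rule joined_sym)
  assume "?rhs w"
  then show ?lhs
  proof (elim disjE conjE)
    assume "joined X u p" "joined X q w"
    then show ?lhs using joined_trans[OF joined_trans[OF mono[of u p] pq] mono[of q w]] by blast
  next
    assume "joined X u q" "joined X p w"
    then show ?lhs using joined_trans[OF joined_trans[OF mono[of u q] qp] mono[of p w]] by blast
  qed (rule mono)
qed

text \<open>If \<open>{k1, k2}\<close> separates the vertices of \<open>X1\<close> from those of \<open>X2\<close>, then, seen from the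
  \<open>X1\<close> side, \<open>X2\<close> only matters through whether it joins \<open>k1\<close> to \<open>k2\<close>; it can be replaced by
  that single edge.\<close>

definition shortcut :: "'v set set \<Rightarrow> 'v set set \<Rightarrow> 'v \<Rightarrow> 'v \<Rightarrow> 'v set set" where
  "shortcut X1 X2 k1 k2 = (if joined X2 k1 k2 then insert {k1, k2} X1 else X1)"

lemma joined_shortcut_imp_joined_Un:
  assumes "joined (shortcut X1 X2 k1 k2) u w"
  shows "joined (X1 \<union> X2) u w"
proof -
  have edge: "joined (X1 \<union> X2) p q" if "{p, q} \<in> shortcut X1 X2 k1 k2" for p q
  proof (cases "{p, q} \<in> X1")
    case True
    then show ?thesis by (intro joined_edge) simp
  next
    case False
    with that have "joined X2 k1 k2" "{p, q} = {k1, k2}"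
      unfolding shortcut_def by (simp_all split: if_splits)
    then have "joined X2 p q" by (auto simp: doubleton_eq_iff intro: joined_sym)
    then show ?thesis by (rule joined_mono) simp
  qed
  from assms show ?thesis
  proof (induction rule: joined_induct)
    case (step y z)
    show ?case by (rule joined_trans[OF step(3) edge[OF step(2)]])
  qed simp
qed

lemma joined_shortcut_cut_vertices:
  assumes "joined X2 p q" "p \<in> {k1, k2}" "q \<in> {k1, k2}"
  shows "joined (shortcut X1 X2 k1 k2) p q"
proof (cases "p = q")
  case False
  then have "{p, q} = {k1, k2}" using assms(2,3) by auto
  moreover have "joined X2 k1 k2"
    using assms(1) \<open>{p, q} = {k1, k2}\<close> by (auto simp: doubleton_eq_iff intro: joined_sym)
  ultimately show ?thesis unfolding shortcut_def by (simp add: joined_edge)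
qed simp

lemma joined_Un_separated_decomp:
  assumes X1: "\<Union>X1 \<subseteq> W1" and X2: "\<Union>X2 \<subseteq> W2" and cut: "W1 \<inter> W2 \<subseteq> {k1, k2}"
    and u: "u \<in> W1" and "joined (X1 \<union> X2) u z"
  shows "\<exists>m\<in>W1. joined (shortcut X1 X2 k1 k2) u m \<and> joined X2 m z \<and> (m = z \<or> m \<in> {k1, k2})"
  using assms(5)
proof (induction rule: joined_induct)
  case refl
  show ?case using u by (intro bexI[of _ u]) simp_all
next
  case (step y z)
  then obtain m where m: "m \<in> W1" "joined (shortcut X1 X2 k1 k2) u m" "joined X2 m y"
    "m = y \<or> m \<in> {k1, k2}" by blast
  show ?case
  proof (cases "{y, z} \<in> X2")
    case True
    have "y \<in> W2" using True X2 by auto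
    then have "m \<in> {k1, k2}" using m(1,4) cut by auto
    moreover have "joined X2 m z" using m(3) True by (rule joined_step)
    ultimately show ?thesis using m(1,2) by blast
  next
    case False
    then have yz: "{y, z} \<in> X1" using step(2) by blast
    then have "y \<in> W1" "z \<in> W1" using X1 by auto
    have "joined (shortcut X1 X2 k1 k2) m y"
    proof (cases "m = y")
      case False
      then have "y \<in> W2" using joined_in_Union[OF m(3)] X2 by auto
      then have "y \<in> {k1, k2}" using \<open>y \<in> W1\<close> cut by auto
      then show ?thesis using joined_shortcut_cut_vertices[OF m(3)] m(4) False by blast
    qed simp
    moreover have "{y, z} \<in> shortcut X1 X2 k1 k2" using yz by (simp add: shortcut_def)
    ultimately have "joined (shortcut X1 X2 k1 k2) u z"
      using joined_step[OF joined_trans[OF m(2)]] by blast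
    then show ?thesis using \<open>z \<in> W1\<close> by (intro bexI[of _ z]) simp_all
  qed
qed

lemma joined_Un_separated_same_side:
  assumes X1: "\<Union>X1 \<subseteq> W1" and X2: "\<Union>X2 \<subseteq> W2" and cut: "W1 \<inter> W2 \<subseteq> {k1, k2}"
    and u: "u \<in> W1" and w: "w \<in> W1"
  shows "joined (X1 \<union> X2) u w \<longleftrightarrow> joined (shortcut X1 X2 k1 k2) u w"
proof
  assume "joined (X1 \<union> X2) u w"
  then obtain m where m: "m \<in> W1" "joined (shortcut X1 X2 k1 k2) u m" "joined X2 m w"
    "m = w \<or> m \<in> {k1, k2}"
    using joined_Un_separated_decomp[OF X1 X2 cut u] by blast
  have "joined (shortcut X1 X2 k1 k2) m w"
  proof (cases "m = w")
    case False
    then have "w \<in> W2" using joined_in_Union[OF m(3)] X2 by auto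
    then have "w \<in> {k1, k2}" using w cut by auto
    then show ?thesis using joined_shortcut_cut_vertices[OF m(3)] m(4) False by blast
  qed simp
  then show "joined (shortcut X1 X2 k1 k2) u w" by (rule joined_trans[OF m(2)])
qed (rule joined_shortcut_imp_joined_Un)

lemma joined_Un_separated_across:
  assumes X1: "\<Union>X1 \<subseteq> W1" and X2: "\<Union>X2 \<subseteq> W2" and cut: "W1 \<inter> W2 \<subseteq> {k1, k2}"
    and u: "u \<in> W1" and w: "w \<notin> W1"
  shows "joined (X1 \<union> X2) u w \<longleftrightarrow>
    (joined X1 u k1 \<and> joined X2 k1 w) \<or> (joined X1 u k2 \<and> joined X2 k2 w)"
proof
  assume "joined (X1 \<union> X2) u w"
  then obtain m where m: "m \<in> {k1, k2}" "joined (shortcut X1 X2 k1 k2) u m" "joined X2 m w"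
    using joined_Un_separated_decomp[OF X1 X2 cut u] w by blast
  show "(joined X1 u k1 \<and> joined X2 k1 w) \<or> (joined X1 u k2 \<and> joined X2 k2 w)"
  proof (cases "joined X2 k1 k2")
    case True
    then have "joined X2 k m" if "k \<in> {k1, k2}" for k
      using that m(1) by (auto intro: joined_sym)
    then have "joined X2 k w" if "k \<in> {k1, k2}" for k
      using that joined_trans[OF _ m(3)] by blast
    moreover have "joined X1 u k1 \<or> joined X1 u k2"
      using m(1,2) True by (auto simp: shortcut_def joined_insert_edge_iff)
    ultimately show ?thesis by blast
  next
    case False
    then show ?thesis using m by (auto simp: shortcut_def)
  qed
next
  have "joined (X1 \<union> X2) p q" if "joined X1 p q" for p q
    using that by (rule joined_mono) simp
  moreover have "joined (X1 \<union> X2) p q" if "joined X2 p q" for p q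
    using that by (rule joined_mono) simp
  ultimately show "(joined X1 u k1 \<and> joined X2 k1 w) \<or> (joined X1 u k2 \<and> joined X2 k2 w) \<Longrightarrow>
      joined (X1 \<union> X2) u w"
    by (blast intro: joined_trans)
qed

section \<open>Bunkbed graphs\<close>

lemma symmetric_weight_bounds:
  "symmetric_weight V E mu \<Longrightarrow> e \<in> bb_edges V E \<Longrightarrow> 0 \<le> mu e \<and> mu e \<le> 1"
  unfolding symmetric_weight_def by blast

lemma finite_bb_edges:
  assumes "simple_graph V E"
  shows "finite (bb_edges V E)"
proof -
  let ?H = "(\<lambda>(x, y, s). {(x, s), (y, s)}) ` (V \<times> V \<times> UNIV)"
  let ?P = "(\<lambda>x. {(x, False), (x, True)}) ` V"
  have "bb_edges V E \<subseteq> ?H \<union> ?P"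
    using assms unfolding simple_graph_def bb_edges_def
    by (fastforce simp: doubleton_eq_iff image_iff)
  moreover have "finite (?H \<union> ?P)" using assms by (simp add: simple_graph_def)
  ultimately show ?thesis by (rule finite_subset)
qed

lemma bb_edges_horizontal: "{x, y} \<in> E \<Longrightarrow> {(x, s), (y, s)} \<in> bb_edges V E"
  unfolding bb_edges_def by blast

lemma bb_edges_vertical: "x \<in> V \<Longrightarrow> {(x, False), (x, True)} \<in> bb_edges V E"
  unfolding bb_edges_def by blast

lemma bb_edges_cases [consumes 1, case_names horizontal vertical]:
  assumes "e \<in> bb_edges V E"
  obtains x y s where "e = {(x, s), (y, s)}" "{x, y} \<in> E"
    | x where "e = {(x, False), (x, True)}" "x \<in> V"
  using assms unfolding bb_edges_def by blast

lemma bb_edges_Un: "bb_edges (V1 \<union> V2) (E1 \<union> E2) = bb_edges V1 E1 \<union> bb_edges V2 E2"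
proof (intro equalityI subsetI)
  fix e assume "e \<in> bb_edges (V1 \<union> V2) (E1 \<union> E2)"
  then show "e \<in> bb_edges V1 E1 \<union> bb_edges V2 E2"
    by (cases rule: bb_edges_cases) (auto intro: bb_edges_horizontal bb_edges_vertical)
next
  fix e assume "e \<in> bb_edges V1 E1 \<union> bb_edges V2 E2"
  then show "e \<in> bb_edges (V1 \<union> V2) (E1 \<union> E2)"
    by (auto elim!: bb_edges_cases intro: bb_edges_horizontal bb_edges_vertical)
qed

lemma bb_edges_image:
  assumes "inj h"
  shows "bb_edges (h ` V) ((\<lambda>e. h ` e) ` E) = (\<lambda>e. map_prod h id ` e) ` bb_edges V E"
proof (intro equalityI subsetI)
  fix e assume "e \<in> bb_edges (h ` V) ((\<lambda>e. h ` e) ` E)"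
  then show "e \<in> (\<lambda>e. map_prod h id ` e) ` bb_edges V E"
  proof (cases rule: bb_edges_cases)
    case (horizontal x' y' s)
    then obtain e0 where e0: "e0 \<in> E" "{x', y'} = h ` e0" by blast
    moreover obtain x y where "x' = h x" "y' = h y" "e0 = {x, y}"
      using image_eq_doubleton_obtain[OF assms e0(2)] .
    ultimately have "{(x, s), (y, s)} \<in> bb_edges V E" "e = map_prod h id ` {(x, s), (y, s)}"
      using horizontal(1) by (simp_all add: bb_edges_horizontal)
    then show ?thesis by blast
  next
    case (vertical x')
    then obtain x where "x \<in> V" "x' = h x" by blast
    then have "{(x, False), (x, True)} \<in> bb_edges V E" "e = map_prod h id ` {(x, False), (x, True)}"
      using vertical(1) by (simp_all add: bb_edges_vertical)
    then show ?thesis by blast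
  qed
next
  fix e assume "e \<in> (\<lambda>e. map_prod h id ` e) ` bb_edges V E"
  then obtain e0 where e0: "e = map_prod h id ` e0" "e0 \<in> bb_edges V E" by blast
  from e0(2) show "e \<in> bb_edges (h ` V) ((\<lambda>e. h ` e) ` E)"
  proof (cases rule: bb_edges_cases)
    case (horizontal x y s)
    then have "h ` {x, y} \<in> (\<lambda>e. h ` e) ` E" by (intro imageI)
    then show ?thesis using horizontal(1) e0(1) by (simp add: bb_edges_horizontal)
  next
    case (vertical x)
    then show ?thesis using e0(1) by (simp add: bb_edges_vertical)
  qed
qed

lemma inj_map_prod_id_Not: "inj (map_prod id Not)"
  unfolding inj_def by auto

lemma map_prod_id_Not_involutive [simp]: "map_prod id Not (map_prod id Not p) = p"
  by (cases p) simp

lemma image_map_prod_id_Not_involutive [simp]: "map_prod id Not ` map_prod id Not ` A = A"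
  by (simp add: image_image)

lemma bb_edges_flip: "image (map_prod id Not) ` bb_edges V E = bb_edges V E"
proof -
  have flip: "map_prod id Not ` e \<in> bb_edges V E" if "e \<in> bb_edges V E" for e
    using that
    by (cases rule: bb_edges_cases) (auto simp: insert_commute intro: bb_edges_horizontal bb_edges_vertical)
  then have "bb_edges V E \<subseteq> image (map_prod id Not) ` bb_edges V E"
    using image_map_prod_id_Not_involutive by (metis image_eqI subsetI)
  then show ?thesis using flip by blast
qed

lemma symmetric_weight_flip:
  assumes "symmetric_weight V E mu" "e \<in> bb_edges V E"
  shows "mu (map_prod id Not ` e) = mu e"
  using assms(2)
proof (cases rule: bb_edges_cases)
  case (horizontal x y s)
  then show ?thesis using assms(1) unfolding symmetric_weight_def by (cases s) auto
next
  case (vertical x)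
  then show ?thesis by (simp add: insert_commute)
qed

lemma joined_flip_iff:
  "joined (image (image (map_prod id Not)) X) p q \<longleftrightarrow> joined X (map_prod id Not p) (map_prod id Not q)"
  using joined_image_iff[OF inj_map_prod_id_Not, of X "map_prod id Not p" "map_prod id Not q"] by simp

lemma perc_expect_flip:
  assumes "symmetric_weight V E mu" "E' \<subseteq> bb_edges V E" "image (map_prod id Not) ` E' = E'"
  shows "perc_expect E' mu F = perc_expect E' mu (\<lambda>X. F (image (image (map_prod id Not)) X))"
proof -
  have inj: "inj_on (image (map_prod id Not)) E'"
    using inj_map_prod_id_Not by (intro inj_on_image) (rule inj_on_subset, auto)
  have "perc_expect E' mu F = perc_expect (image (map_prod id Not) ` E') mu F"
    using assms(3) by simp
  also have "\<dots> = perc_expect E' (mu \<circ> image (map_prod id Not)) (\<lambda>X. F (image (image (map_prod id Not)) X))"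
    by (rule perc_expect_reindex[OF inj])
  also have "\<dots> = perc_expect E' mu (\<lambda>X. F (image (image (map_prod id Not)) X))"
    using assms(2) symmetric_weight_flip[OF assms(1)] by (intro perc_expect_cong) auto
  finally show ?thesis .
qed

lemma pair_in_range_map_prod_id [simp]: "(h x, s) \<in> range (map_prod h id)"
  by (rule range_eqI[of _ _ "(x, s)"]) simp

section \<open>Gluing two graphs at a vertex\<close>

text \<open>A and B are embedded into a common vertex type by \<open>f\<close> and \<open>g\<close>, whose images meet only in
  \<open>f a = g b\<close>. This makes the roles of A and B symmetric (see the sublocale \<open>swap\<close>).\<close>

locale bunkbed_gluing =
  fixes VA :: "'a set" and EA :: "'a set set" and VB :: "'b set" and EB :: "'b set set"
    and f :: "'a \<Rightarrow> 'v" and g :: "'b \<Rightarrow> 'v" and a :: 'a and b :: 'b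
  assumes simple_A: "simple_graph VA EA" and simple_B: "simple_graph VB EB"
    and a_in_VA: "a \<in> VA" and b_in_VB: "b \<in> VB"
    and inj_f: "inj f" and inj_g: "inj g"
    and glued: "f a = g b" and images_meet: "f x = g y \<Longrightarrow> x = a \<and> y = b"
begin

definition glued_V :: "'v set" where "glued_V = f ` VA \<union> g ` VB"

definition glued_E :: "'v set set" where "glued_E = image f ` EA \<union> image g ` EB"

definition bbA :: "('v \<times> bool) set set" where "bbA = bb_edges (f ` VA) (image f ` EA)"

definition bbB :: "('v \<times> bool) set set" where "bbB = bb_edges (g ` VB) (image g ` EB)"

definition post :: "('v \<times> bool) set" where "post = {(f a, False), (f a, True)}"

text \<open>The post at the glued vertex lies in both \<open>bbA\<close> and \<open>bbB\<close>; it is counted in \<open>bbA\<close>.\<close>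

definition bbB_rest :: "('v \<times> bool) set set" where "bbB_rest = bbB - {post}"

lemma bbA_eq_image: "bbA = image (map_prod f id) ` bb_edges VA EA"
  unfolding bbA_def by (rule bb_edges_image[OF inj_f])

lemma bbB_eq_image: "bbB = image (map_prod g id) ` bb_edges VB EB"
  unfolding bbB_def by (rule bb_edges_image[OF inj_g])

lemma finite_bbA: "finite bbA"
  unfolding bbA_eq_image using finite_bb_edges[OF simple_A] by simp

lemma finite_bbB: "finite bbB"
  unfolding bbB_eq_image using finite_bb_edges[OF simple_B] by simp

lemma post_in_bbA: "post \<in> bbA"
  unfolding bbA_def post_def using a_in_VA by (simp add: bb_edges_vertical)

lemma post_in_bbB: "post \<in> bbB"
  unfolding bbB_def post_def glued using b_in_VB by (simp add: bb_edges_vertical)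

lemma Union_bbA: "\<Union>bbA \<subseteq> range (map_prod f id)"
  unfolding bbA_eq_image by auto

lemma Union_bbB: "\<Union>bbB \<subseteq> range (map_prod g id)"
  unfolding bbB_eq_image by auto

lemma range_inter_range: "range (map_prod f id) \<inter> range (map_prod g id) \<subseteq> post"
proof
  fix p :: "'v \<times> bool" assume p: "p \<in> range (map_prod f id) \<inter> range (map_prod g id)"
  obtain x s where xs: "p = (f x, s)" using p by auto
  obtain y t where "p = (g y, t)" using p by auto
  then have "x = a" using xs images_meet by simp
  then show "p \<in> post" using xs unfolding post_def by (cases s) auto
qed

lemma bbA_inter_bbB: "bbA \<inter> bbB = {post}"
proof -
  have "e = post" if "e \<in> bbA" "e \<in> bbB" for e
  proof -
    have "e \<subseteq> range (map_prod f id)" "e \<subseteq> range (map_prod g id)"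
      using that Union_bbA Union_bbB by auto
    then have sub: "e \<subseteq> post" using range_inter_range by auto
    from \<open>e \<in> bbA\<close> obtain e0 where e0: "e0 \<in> bb_edges VA EA" "e = map_prod f id ` e0"
      unfolding bbA_eq_image by blast
    from e0(1) show ?thesis
    proof (cases rule: bb_edges_cases)
      case (horizontal x y s)
      then have "f x = f a" "f y = f a" using e0(2) sub unfolding post_def by auto
      then have "x = y" using inj_f by (simp add: inj_eq)
      then show ?thesis
        using horizontal(2) simple_A unfolding simple_graph_def by (auto simp: doubleton_eq_iff)
    next
      case (vertical x)
      then have "f x = f a" using e0(2) sub unfolding post_def by auto
      then show ?thesis using e0(2) vertical(1) unfolding post_def by simp
    qed
  qed
  then show ?thesis using post_in_bbA post_in_bbB by blast
qed

lemma bb_edges_glued: "bb_edges glued_V glued_E = bbA \<union> bbB_rest"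
  and bbA_inter_bbB_rest: "bbA \<inter> bbB_rest = {}"
  and finite_bbB_rest: "finite bbB_rest"
  using bbA_inter_bbB post_in_bbA finite_bbB
  unfolding glued_V_def glued_E_def bbA_def bbB_def bbB_rest_def bb_edges_Un by auto

lemma symmetric_weight_restrict:
  assumes sym: "symmetric_weight glued_V glued_E mu" and r: "0 \<le> r" "r \<le> 1"
  shows "symmetric_weight VA EA (mu(post := r) \<circ> image (map_prod f id))"
  unfolding symmetric_weight_def
proof (intro conjI ballI allI impI)
  fix e assume "e \<in> bb_edges VA EA"
  then have "map_prod f id ` e \<in> bb_edges glued_V glued_E"
    unfolding bb_edges_glued bbA_eq_image by blast
  then show "0 \<le> (mu(post := r) \<circ> image (map_prod f id)) e"
    "(mu(post := r) \<circ> image (map_prod f id)) e \<le> 1"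
    using symmetric_weight_bounds[OF sym] r by auto
next
  fix x y assume "{x, y} \<in> EA"
  then have "f ` {x, y} \<in> image f ` EA" by (rule imageI)
  then have "{f x, f y} \<in> glued_E" unfolding glued_E_def by simp
  then have "mu {(f x, False), (f y, False)} = mu {(f x, True), (f y, True)}"
    using sym unfolding symmetric_weight_def by blast
  moreover have "{(f x, s), (f y, s)} \<noteq> post" for s
    unfolding post_def by (auto simp: doubleton_eq_iff)
  ultimately show "(mu(post := r) \<circ> image (map_prod f id)) {(x, False), (y, False)} =
      (mu(post := r) \<circ> image (map_prod f id)) {(x, True), (y, True)}"
    by simp
qed

lemma perc_expect_bbA_joined:
  "perc_expect bbA nu (\<lambda>X. of_bool (joined X (f x, s) (f y, t))) =
    perc_prob (bb_edges VA EA) (nu \<circ> image (map_prod f id)) (\<lambda>X. joined X (x, s) (y, t))"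
proof -
  have inj: "inj (map_prod f id)" using inj_f unfolding inj_def by auto
  then have "inj_on (image (map_prod f id)) (bb_edges VA EA)"
    by (intro inj_on_image) (rule inj_on_subset, auto)
  then have "perc_expect bbA nu (\<lambda>X. of_bool (joined X (f x, s) (f y, t))) =
      perc_expect (bb_edges VA EA) (nu \<circ> image (map_prod f id))
        (\<lambda>X. of_bool (joined (image (map_prod f id) ` X) (map_prod f id (x, s)) (map_prod f id (y, t))))"
    unfolding bbA_eq_image by (subst perc_expect_reindex) simp_all
  also have "\<dots> = perc_expect (bb_edges VA EA) (nu \<circ> image (map_prod f id))
      (\<lambda>X. of_bool (joined X (x, s) (y, t)))"
    by (simp only: joined_image_iff[OF inj])
  finally show ?thesis
    by (simp add: perc_prob_eq_perc_expect[OF finite_bb_edges[OF simple_A]])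
qed

lemma perc_expect_bbA_bunkbed_ineq:
  assumes "bunkbed VA EA" "symmetric_weight glued_V glued_E mu" "0 \<le> r" "r \<le> 1"
    and "x \<in> VA" "y \<in> VA"
  shows "perc_expect bbA (mu(post := r)) (\<lambda>X. of_bool (joined X (f x, False) (f y, True)))
    \<le> perc_expect bbA (mu(post := r)) (\<lambda>X. of_bool (joined X (f x, False) (f y, False)))"
  using assms(1) symmetric_weight_restrict[OF assms(2-4)] assms(5,6)
  unfolding perc_expect_bbA_joined bunkbed_def by blast

lemma perc_prob_glued_eq:
  "perc_prob (bb_edges glued_V glued_E) mu P =
    perc_expect bbA mu (\<lambda>X1. perc_expect bbB_rest mu (\<lambda>X2. of_bool (P (X1 \<union> X2))))"
  unfolding bb_edges_glued
  using finite_bbA finite_bbB_rest bbA_inter_bbB_rest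
  by (simp add: perc_prob_eq_perc_expect perc_expect_Un_disjoint)

lemma Union_sides:
  assumes "X1 \<subseteq> bbA" "X2 \<subseteq> bbB_rest"
  shows "\<Union>X1 \<subseteq> range (map_prod f id)" "\<Union>X2 \<subseteq> range (map_prod g id)"
proof -
  have "X2 \<subseteq> bbB" using assms(2) unfolding bbB_rest_def by blast
  then show "\<Union>X1 \<subseteq> range (map_prod f id)" "\<Union>X2 \<subseteq> range (map_prod g id)"
    using order_trans[OF Union_mono[OF assms(1)] Union_bbA] order_trans[OF Union_mono Union_bbB]
    by blast+
qed

lemma joined_glued_same_side:
  assumes "X1 \<subseteq> bbA" "X2 \<subseteq> bbB_rest" "u \<in> range (map_prod f id)" "w \<in> range (map_prod f id)"
  shows "joined (X1 \<union> X2) u w \<longleftrightarrow>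
    (if joined X2 (f a, False) (f a, True) then joined (insert post X1) u w else joined X1 u w)"
proof -
  from joined_Un_separated_same_side[OF Union_sides[OF assms(1,2)] _ assms(3,4)] range_inter_range
  show ?thesis unfolding shortcut_def post_def by simp
qed

lemma joined_glued_across:
  assumes "X1 \<subseteq> bbA" "X2 \<subseteq> bbB_rest" "u \<in> range (map_prod f id)" "w \<notin> range (map_prod f id)"
  shows "joined (X1 \<union> X2) u w \<longleftrightarrow>
    (joined X1 u (f a, False) \<and> joined X2 (f a, False) w) \<or>
    (joined X1 u (f a, True) \<and> joined X2 (f a, True) w)"
proof -
  from joined_Un_separated_across[OF Union_sides[OF assms(1,2)] _ assms(3,4)] range_inter_range
  show ?thesis unfolding post_def by simp
qed

lemma perc_prob_glued_same_side:
  fixes mu :: "('v \<times> bool) set \<Rightarrow> real"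
  assumes "u \<in> range (map_prod f id)" "w \<in> range (map_prod f id)"
  defines "p \<equiv> perc_expect bbB_rest mu (\<lambda>X. of_bool (joined X (f a, False) (f a, True)))"
  shows "perc_prob (bb_edges glued_V glued_E) mu (\<lambda>X. joined X u w) =
    p * perc_expect bbA (mu(post := 1)) (\<lambda>X. of_bool (joined X u w)) +
    (1 - p) * perc_expect bbA mu (\<lambda>X. of_bool (joined X u w))"
proof -
  have "perc_prob (bb_edges glued_V glued_E) mu (\<lambda>X. joined X u w) =
      perc_expect bbA mu (\<lambda>X1. perc_expect bbB_rest mu (\<lambda>X2.
        if joined X2 (f a, False) (f a, True)
        then of_bool (joined (insert post X1) u w) else of_bool (joined X1 u w)))"
    unfolding perc_prob_glued_eq using joined_glued_same_side[OF _ _ assms(1,2)]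
    by (intro perc_expect_cong refl) simp
  also have "\<dots> = perc_expect bbA mu (\<lambda>X1.
      p * of_bool (joined (insert post X1) u w) + (1 - p) * of_bool (joined X1 u w))"
    unfolding p_def by (simp add: perc_expect_if[OF finite_bbB_rest])
  also have "\<dots> = p * perc_expect bbA mu (\<lambda>X. of_bool (joined (insert post X) u w)) +
      (1 - p) * perc_expect bbA mu (\<lambda>X. of_bool (joined X u w))"
    by (simp add: perc_expect_add perc_expect_cmult)
  finally show ?thesis
    using perc_expect_insert_eq_weight_one[OF finite_bbA post_in_bbA, of mu "\<lambda>X. of_bool (joined X u w)"]
    by simp
qed

lemma perc_prob_glued_across:
  assumes "u \<in> range (map_prod f id)" "w \<notin> range (map_prod f id)"
  shows "perc_prob (bb_edges glued_V glued_E) mu (\<lambda>X. joined X u w) =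
    perc_expect bbA mu (\<lambda>X. of_bool (joined X u (f a, False))) *
      perc_expect bbB_rest mu (\<lambda>X. of_bool (joined X (f a, False) w)) +
    perc_expect bbA mu (\<lambda>X. of_bool (joined X u (f a, True))) *
      perc_expect bbB_rest mu (\<lambda>X. of_bool (joined X (f a, True) w)) -
    perc_expect bbA mu (\<lambda>X. of_bool (joined X u (f a, False) \<and> joined X u (f a, True))) *
      perc_expect bbB_rest mu (\<lambda>X. of_bool (joined X (f a, False) w \<and> joined X (f a, True) w))"
proof -
  have "perc_prob (bb_edges glued_V glued_E) mu (\<lambda>X. joined X u w) =
      perc_expect bbA mu (\<lambda>X1. perc_expect bbB_rest mu (\<lambda>X2.
        of_bool (joined X1 u (f a, False)) * of_bool (joined X2 (f a, False) w) +
        of_bool (joined X1 u (f a, True)) * of_bool (joined X2 (f a, True) w) -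
        of_bool (joined X1 u (f a, False) \<and> joined X1 u (f a, True)) *
          of_bool (joined X2 (f a, False) w \<and> joined X2 (f a, True) w)))"
    unfolding perc_prob_glued_eq using joined_glued_across[OF _ _ assms]
    by (intro perc_expect_cong refl) (simp only: of_bool_disj_conj)
  then show ?thesis
    by (simp add: perc_expect_add perc_expect_diff perc_expect_cmult perc_expect_multc)
qed

lemma bbB_rest_flip: "image (map_prod id Not) ` bbB_rest = bbB_rest"
proof -
  have "inj (image (map_prod id Not))"
    by (simp add: inj_image_eq_iff inj_map_prod_id_Not inj_def)
  then have "image (map_prod id Not) ` bbB_rest =
      image (map_prod id Not) ` bbB - image (map_prod id Not) ` {post}"
    unfolding bbB_rest_def by (rule image_set_diff)
  moreover have "image (map_prod id Not) ` bbB = bbB" unfolding bbB_def by (rule bb_edges_flip)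
  moreover have "image (map_prod id Not) post = post" unfolding post_def by auto
  ultimately show ?thesis unfolding bbB_rest_def by simp
qed

lemma perc_expect_bbB_rest_flip:
  assumes "symmetric_weight glued_V glued_E mu"
  shows "perc_expect bbB_rest mu F =
    perc_expect bbB_rest mu (\<lambda>X. F (image (image (map_prod id Not)) X))"
  by (rule perc_expect_flip[OF assms _ bbB_rest_flip]) (simp add: bb_edges_glued)

end

sublocale bunkbed_gluing \<subseteq> swap: bunkbed_gluing VB EB VA EA g f b a
proof
  fix x y assume "g x = f y"
  then show "x = b \<and> y = a" using images_meet[of y x] by simp
qed (use simple_A simple_B a_in_VA b_in_VB inj_f inj_g glued in simp_all)

context bunkbed_gluing
begin

lemma swap_glued_V: "swap.glued_V = glued_V"
  unfolding swap.glued_V_def glued_V_def by (rule Un_commute)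

lemma swap_glued_E: "swap.glued_E = glued_E"
  unfolding swap.glued_E_def glued_E_def by (rule Un_commute)

lemma swap_bbA: "swap.bbA = bbB"
  unfolding swap.bbA_def bbB_def ..

lemma swap_post: "swap.post = post"
  unfolding swap.post_def post_def glued ..

lemma symmetric_weight_swap_iff:
  "symmetric_weight swap.glued_V swap.glued_E mu \<longleftrightarrow> symmetric_weight glued_V glued_E mu"
  unfolding swap_glued_V swap_glued_E ..

lemma post_weight_bounds:
  assumes "symmetric_weight glued_V glued_E mu"
  shows "0 \<le> mu post" "mu post \<le> 1"
  using symmetric_weight_bounds[OF assms] post_in_bbA unfolding bb_edges_glued by auto

lemma bunkbed_ineq_same_side:
  assumes bbA: "bunkbed VA EA" and sym: "symmetric_weight glued_V glued_E mu"
    and "x \<in> VA" "y \<in> VA"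
  shows "perc_prob (bb_edges glued_V glued_E) mu (\<lambda>X. joined X (f x, False) (f y, True))
    \<le> perc_prob (bb_edges glued_V glued_E) mu (\<lambda>X. joined X (f x, False) (f y, False))"
proof -
  define p where "p = perc_expect bbB_rest mu (\<lambda>X. of_bool (joined X (f a, False) (f a, True)))"
  define Q where "Q r t = perc_expect bbA (mu(post := r)) (\<lambda>X. of_bool (joined X (f x, False) (f y, t)))"
    for r t
  have decomp: "perc_prob (bb_edges glued_V glued_E) mu (\<lambda>X. joined X (f x, False) (f y, t)) =
      p * Q 1 t + (1 - p) * Q (mu post) t" for t
    using perc_prob_glued_same_side[of "(f x, False)" "(f y, t)" mu] unfolding p_def Q_def by simp
  have Q_le: "Q r True \<le> Q r False" if "0 \<le> r" "r \<le> 1" for r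
    unfolding Q_def using perc_expect_bbA_bunkbed_ineq[OF bbA sym that \<open>x \<in> VA\<close> \<open>y \<in> VA\<close>] .
  have "0 \<le> p" "p \<le> 1"
    unfolding p_def using finite_bbB_rest symmetric_weight_bounds[OF sym]
    by (auto intro!: perc_expect_of_bool_bounds simp: bb_edges_glued)
  then show ?thesis
    unfolding decomp using Q_le[of 1] Q_le[OF post_weight_bounds[OF sym]]
    by (intro add_mono mult_left_mono) simp_all
qed

lemma perc_expect_bbB_rest_bunkbed_ineq:
  assumes "bunkbed VB EB" "symmetric_weight glued_V glued_E mu" "y \<in> VB"
  shows "perc_expect bbB_rest mu (\<lambda>X. of_bool (joined X (f a, True) (g y, False)))
    \<le> perc_expect bbB_rest mu (\<lambda>X. of_bool (joined X (f a, False) (g y, False)))"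
proof -
  have "perc_expect bbB_rest mu (\<lambda>X. of_bool (joined X (f a, s) (g y, False))) =
      perc_expect bbB (mu(post := 0)) (\<lambda>X. of_bool (joined X (g y, False) (g b, s)))" for s
    unfolding bbB_rest_def glued
    by (simp add: perc_expect_remove_eq_weight_zero[OF finite_bbB post_in_bbB] joined_commute)
  then show ?thesis
    using swap.perc_expect_bbA_bunkbed_ineq[OF assms(1) _ _ _ assms(3) b_in_VB, of mu 0] assms(2)
    unfolding swap_bbA swap_post symmetric_weight_swap_iff by simp
qed

lemma bunkbed_ineq_across:
  assumes bbA: "bunkbed VA EA" and bbB: "bunkbed VB EB" and sym: "symmetric_weight glued_V glued_E mu"
    and x: "x \<in> VA" "x \<noteq> a" and y: "y \<in> VB" "y \<noteq> b"
  shows "perc_prob (bb_edges glued_V glued_E) mu (\<lambda>X. joined X (f x, False) (g y, True))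
    \<le> perc_prob (bb_edges glued_V glued_E) mu (\<lambda>X. joined X (f x, False) (g y, False))"
proof -
  define \<alpha> where "\<alpha> s = perc_expect bbA mu (\<lambda>X. of_bool (joined X (f x, False) (f a, s)))" for s
  define \<alpha>' where "\<alpha>' = perc_expect bbA mu
    (\<lambda>X. of_bool (joined X (f x, False) (f a, False) \<and> joined X (f x, False) (f a, True)))"
  define \<beta> where "\<beta> s t = perc_expect bbB_rest mu (\<lambda>X. of_bool (joined X (f a, s) (g y, t)))" for s t
  define \<beta>' where "\<beta>' t = perc_expect bbB_rest mu
    (\<lambda>X. of_bool (joined X (f a, False) (g y, t) \<and> joined X (f a, True) (g y, t)))" for t
  have "(g y, t) \<notin> range (map_prod f id)" for t :: bool
    using y images_meet by auto
  then have decomp: "perc_prob (bb_edges glued_V glued_E) mu (\<lambda>X. joined X (f x, False) (g y, t)) =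
      \<alpha> False * \<beta> False t + \<alpha> True * \<beta> True t - \<alpha>' * \<beta>' t" for t
    using perc_prob_glued_across[of "(f x, False)" "(g y, t)" mu]
    unfolding \<alpha>_def \<alpha>'_def \<beta>_def \<beta>'_def by simp
  have \<beta>_flip: "\<beta> s True = \<beta> (\<not> s) False" for s
    unfolding \<beta>_def by (subst perc_expect_bbB_rest_flip[OF sym]) (simp add: joined_flip_iff)
  have \<beta>'_flip: "\<beta>' True = \<beta>' False"
    unfolding \<beta>'_def by (subst perc_expect_bbB_rest_flip[OF sym]) (simp add: joined_flip_iff conj_commute)
  have "\<alpha> True \<le> \<alpha> False"
    using perc_expect_bbA_bunkbed_ineq[OF bbA sym post_weight_bounds[OF sym] x(1) a_in_VA]
    unfolding \<alpha>_def by simp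
  moreover have "\<beta> True False \<le> \<beta> False False"
    unfolding \<beta>_def by (rule perc_expect_bbB_rest_bunkbed_ineq[OF bbB sym y(1)])
  ultimately have "0 \<le> (\<alpha> False - \<alpha> True) * (\<beta> False False - \<beta> True False)"
    by simp
  then show ?thesis
    unfolding decomp \<beta>_flip \<beta>'_flip by (simp add: algebra_simps)
qed

end

context bunkbed_gluing
begin

lemma bunkbed_ineq_from_A:
  assumes bbA: "bunkbed VA EA" and bbB: "bunkbed VB EB" and sym: "symmetric_weight glued_V glued_E mu"
    and x: "x \<in> VA" and y: "y \<in> glued_V"
  shows "perc_prob (bb_edges glued_V glued_E) mu (\<lambda>X. joined X (f x, False) (y, True))
    \<le> perc_prob (bb_edges glued_V glued_E) mu (\<lambda>X. joined X (f x, False) (y, False))"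
proof (cases "y \<in> f ` VA")
  case True
  then show ?thesis using bunkbed_ineq_same_side[OF bbA sym x] by blast
next
  case False
  then obtain y' where y': "y' \<in> VB" "y = g y'"
    using y unfolding glued_V_def by blast
  moreover have "y' \<noteq> b" using False y' a_in_VA glued[symmetric] by auto
  ultimately have y': "y' \<in> VB" "y' \<noteq> b" "y = g y'" by simp_all
  have sym': "symmetric_weight swap.glued_V swap.glued_E mu"
    using sym unfolding symmetric_weight_swap_iff .
  show ?thesis
  proof (cases "x = a")
    case True
    then show ?thesis
      using swap.bunkbed_ineq_same_side[OF bbB sym' b_in_VB y'(1)] y'(3) glued
      unfolding swap_glued_V swap_glued_E by simp
  next
    case False
    then show ?thesis using bunkbed_ineq_across[OF bbA bbB sym x False y'(1,2)] y'(3) by simp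
  qed
qed

end

context bunkbed_gluing
begin

theorem bunkbed_glued:
  assumes "bunkbed VA EA" "bunkbed VB EB"
  shows "bunkbed glued_V glued_E"
  unfolding bunkbed_def
proof (intro allI impI ballI)
  fix mu x y assume sym: "symmetric_weight glued_V glued_E mu" and "x \<in> glued_V" "y \<in> glued_V"
  then consider x' where "x' \<in> VA" "x = f x'" | x' where "x' \<in> VB" "x = g x'"
    unfolding glued_V_def by blast
  then show "perc_prob (bb_edges glued_V glued_E) mu (\<lambda>X. joined X (x, False) (y, True))
    \<le> perc_prob (bb_edges glued_V glued_E) mu (\<lambda>X. joined X (x, False) (y, False))"
  proof cases
    case 1
    then show ?thesis using bunkbed_ineq_from_A[OF assms sym _ \<open>y \<in> glued_V\<close>] by simp
  next
    case 2
    then show ?thesis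
      using swap.bunkbed_ineq_from_A[OF assms(2,1)] sym \<open>y \<in> glued_V\<close>
      unfolding symmetric_weight_swap_iff swap_glued_V swap_glued_E by simp
  qed
qed

end

theorem theorem3p5:
  fixes VA :: "'a set" and EA :: "'a set set" and VB :: "'b set" and EB :: "'b set set"
    and a :: 'a and b :: 'b
  assumes "simple_graph VA EA" and "simple_graph VB EB"
    and "a \<in> VA" and "b \<in> VB"
    and "bunkbed VA EA" and "bunkbed VB EB"
  shows "bunkbed (glue_vertices VA VB a b) (glue_edges EA EB a b)"
proof -
  interpret bunkbed_gluing VA EA VB EB Inl "glue_map a b" a b
  proof
    show "inj (glue_map a b)" unfolding inj_def glue_map_def by auto
    fix x y assume "Inl x = glue_map a b y"
    then show "x = a \<and> y = b" by (auto simp: glue_map_def split: if_splits)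
  qed (use assms in \<open>simp_all add: glue_map_def\<close>)
  have "glue_vertices VA VB a b = glued_V" "glue_edges EA EB a b = glued_E"
    unfolding glue_vertices_def glue_edges_def glued_V_def glued_E_def by simp_all
  then show ?thesis using bunkbed_glued assms(5,6) by simp
qed

end
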